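(* A set $U\subseteq\mathcal{B}$ is avoidable if and only if $U^{*}=\{s^{*}\mid s\in U\}$ is avoidable. Furthermore, $U$ is maximal avoidable if and only if $U^{*}$ is maximal avoidable.
   Context: The bicyclic inverse semigroup is $\mathcal{B}=\{(a,b)\in\mathbb{Z}\times\mathbb{Z}\mid a\ge 0,\ a+b\ge 0\}$ with multiplication $(a,b)(c,d)=(\max\{c+d,a\}-d,\ b+d)$ and inverse $(a,b)^{*}=(a+b,-b)$. A subset $U\subseteq\mathcal{B}$ is called avoidable if $\mathcal{B}$ can be partitioned into two subsets $A$ and $B$ such that no element of $U$ can be written as a product $xy$ of two distinct elements $x\neq y$ both in $A$, or both in $B$. A maximal avoidable set is an avoidable set not properly contained in any other avoidable subset of $\mathcal{B}$. *)

theory Defs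
  imports Main
begin

definition bicyclic :: "(int \<times> int) set" where
  "bicyclic = {(a, b). a \<ge> 0 \<and> a + b \<ge> 0}"

definition bmult :: "int \<times> int \<Rightarrow> int \<times> int \<Rightarrow> int \<times> int" where
  "bmult x y = (case x of (a, b) \<Rightarrow> case y of (c, d) \<Rightarrow> (max (c + d) a - d, b + d))"

definition binv :: "int \<times> int \<Rightarrow> int \<times> int" where
  "binv x = (case x of (a, b) \<Rightarrow> (a + b, - b))"

definition product_free_part :: "(int \<times> int) set \<Rightarrow> (int \<times> int) set \<Rightarrow> bool" where
  "product_free_part U P = (\<forall>x\<in>P. \<forall>y\<in>P. x \<noteq> y \<longrightarrow> bmult x y \<notin> U)"

definition avoidable :: "(int \<times> int) set \<Rightarrow> bool" where
  "avoidable U = (U \<subseteq> bicyclic \<and>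
     (\<exists>A B. A \<union> B = bicyclic \<and> A \<inter> B = {} \<and>
            product_free_part U A \<and> product_free_part U B))"

definition maximal_avoidable :: "(int \<times> int) set \<Rightarrow> bool" where
  "maximal_avoidable U = (avoidable U \<and> (\<forall>V. avoidable V \<and> U \<subseteq> V \<longrightarrow> V = U))"

end

theory Submission
  imports Defs
begin

text \<open>Inversion \<open>s \<mapsto> s\<^sup>*\<close> is an involutive anti-automorphism of the bicyclic
  semigroup: \<open>(x y)\<^sup>* = y\<^sup>* x\<^sup>*\<close>. A partition \<open>A, B\<close> witnessing that \<open>U\<close> is
  avoidable is therefore mapped to a partition \<open>A\<^sup>*, B\<^sup>*\<close> witnessing that \<open>U\<^sup>*\<close> is;
  and since \<open>V \<mapsto> V\<^sup>*\<close> is an inclusion-preserving involution on subsets, maximality is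
  preserved as well.\<close>

lemma binv_binv [simp]: "binv (binv x) = x"
  by (cases x) (simp add: binv_def)

lemma bmult_binv_binv: "bmult (binv x) (binv y) = binv (bmult y x)"
  by (cases x; cases y) (simp add: binv_def bmult_def max.commute)

lemma binv_in_bicyclic: "x \<in> bicyclic \<Longrightarrow> binv x \<in> bicyclic"
  by (cases x) (auto simp: binv_def bicyclic_def)

lemma binv_eq_binv_iff [simp]: "binv x = binv y \<longleftrightarrow> x = y"
  by (metis binv_binv)

lemma inj_binv: "inj binv"
  by (metis binv_binv injI)

lemma image_binv_subset_iff: "binv ` U \<subseteq> V \<longleftrightarrow> U \<subseteq> binv ` V"
  by (force simp: image_subset_iff)

lemma image_binv_bicyclic: "binv ` bicyclic = bicyclic"
  using image_binv_subset_iff binv_in_bicyclic by blast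

lemma product_free_part_image_binv:
  "product_free_part (binv ` U) (binv ` P) \<longleftrightarrow> product_free_part U P"
  unfolding product_free_part_def
  by (simp add: bmult_binv_binv inj_image_mem_iff inj_binv) metis

lemma avoidable_image_binv_imp: "avoidable U \<Longrightarrow> avoidable (binv ` U)"
proof -
  assume "avoidable U"
  then obtain A B where U: "U \<subseteq> bicyclic" and partition: "A \<union> B = bicyclic" "A \<inter> B = {}"
    and "product_free_part U A" "product_free_part U B"
    unfolding avoidable_def by blast
  then have "product_free_part (binv ` U) (binv ` A)" "product_free_part (binv ` U) (binv ` B)"
    by (simp_all add: product_free_part_image_binv)
  moreover have "binv ` A \<union> binv ` B = bicyclic"
    using partition(1) by (simp add: image_Un [symmetric] image_binv_bicyclic)
  moreover have "binv ` A \<inter> binv ` B = {}"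
    using partition(2) by (simp add: image_Int [symmetric] inj_binv)
  moreover have "binv ` U \<subseteq> bicyclic"
    using U binv_in_bicyclic by blast
  ultimately show ?thesis
    unfolding avoidable_def by blast
qed


lemma avoidable_image_binv: "avoidable (binv ` U) \<longleftrightarrow> avoidable U"
  using avoidable_image_binv_imp [of U] avoidable_image_binv_imp [of "binv ` U"]
  by (auto simp: image_image)


lemma maximal_avoidable_image_binv_imp:
  assumes "maximal_avoidable U"
  shows "maximal_avoidable (binv ` U)"
  unfolding maximal_avoidable_def
proof (intro conjI allI impI)
  show "avoidable (binv ` U)"
    using assms by (simp add: maximal_avoidable_def avoidable_image_binv)
  fix V assume "avoidable V \<and> binv ` U \<subseteq> V"
  then have "avoidable (binv ` V)" and "U \<subseteq> binv ` V"
    by (simp_all add: avoidable_image_binv image_binv_subset_iff)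
  with assms have "binv ` V = U"
    unfolding maximal_avoidable_def by blast
  then show "V = binv ` U"
    by (auto simp: image_image)
qed


lemma maximal_avoidable_image_binv: "maximal_avoidable (binv ` U) \<longleftrightarrow> maximal_avoidable U"
  using maximal_avoidable_image_binv_imp [of U] maximal_avoidable_image_binv_imp [of "binv ` U"]
  by (auto simp: image_image)


theorem proposition4p1:
  assumes "U \<subseteq> bicyclic"
  shows "(avoidable U \<longleftrightarrow> avoidable (binv ` U)) \<and>
         (maximal_avoidable U \<longleftrightarrow> maximal_avoidable (binv ` U))"
  by (simp add: avoidable_image_binv maximal_avoidable_image_binv)

end
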